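(* Under the hypotheses of Lemma 2.2, define $T=P_1\phi(P_1)P_2+P_2\phi(P_2)P_1$ and the additive map $\varphi:\mathcal{U}\to\mathcal{U}$ by $\varphi(U)=\phi(U)-\phi(I)U+[T,U]$. Then (1) $\varphi(P_1)=\varphi(P_2)=0$; and (2) $\varphi$ satisfies $\varphi(U)\circ V+U\circ\varphi(V)=0$ for all $U,V\in\mathcal{U}$ with $UV=VU=0$.
   Context: $\mathcal{U}=\begin{pmatrix}\mathcal{A}&\mathcal{M}\\ \mathcal{N}&\mathcal{B}\end{pmatrix}$ is a generalized matrix ring: $\mathcal{A},\mathcal{B}$ unital 2-torsion free rings, $\mathcal{M}$ a unital $(\mathcal{A},\mathcal{B})$-bimodule faithful on both sides, $\mathcal{N}$ a unital $(\mathcal{B},\mathcal{A})$-bimodule, with bimodule pairings $MN\in\mathcal{A}$, $NM\in\mathcal{B}$ satisfying $(MN)M'=M(NM')$, $(NM)N'=N(MN')$; $\mathcal{U}$ consists of $2\times2$ matrices with usual matrix operations and identity $I$. The hypotheses of Lemma 2.2: $\phi:\mathcal{U}\to\mathcal{U}$ is additive and $\phi(U)\circ V+U\circ\phi(V)=0$ whenever $UV=VU=0$. $X\circ Y=XY+YX$, $[X,Y]=XY-YX$. $P_1=\mathrm{diag}(I_{\mathcal{A}},0)$, $P_2=\mathrm{diag}(0,I_{\mathcal{B}})$. *)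

theory Defs
  imports Main
begin

text \<open>A generalized matrix ring U = [[A, M], [N, B]] (Morita context).
  A :: 'a, B :: 'b are unital rings; M :: 'm, N :: 'n abelian groups;
  the module actions and the pairings are packaged in a record.\<close>

record ('a, 'm, 'n, 'b) morita =
  lmM :: "'a \<Rightarrow> 'm \<Rightarrow> 'm"
  rmM :: "'m \<Rightarrow> 'b \<Rightarrow> 'm"
  lmN :: "'b \<Rightarrow> 'n \<Rightarrow> 'n"
  rmN :: "'n \<Rightarrow> 'a \<Rightarrow> 'n"
  pMN :: "'m \<Rightarrow> 'n \<Rightarrow> 'a"
  pNM :: "'n \<Rightarrow> 'm \<Rightarrow> 'b"

locale gen_matrix_ring =
  fixes R :: "('a::ring_1, 'm::ab_group_add, 'n::ab_group_add, 'b::ring_1) morita"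
  assumes
    lmM_add1: "lmM R (a + a') m = lmM R a m + lmM R a' m" and
    lmM_add2: "lmM R a (m + m') = lmM R a m + lmM R a m'" and
    lmM_mult: "lmM R (a * a') m = lmM R a (lmM R a' m)" and
    lmM_one: "lmM R 1 m = m" and
    rmM_add1: "rmM R (m + m') b = rmM R m b + rmM R m' b" and
    rmM_add2: "rmM R m (b + b') = rmM R m b + rmM R m b'" and
    rmM_mult: "rmM R m (b * b') = rmM R (rmM R m b) b'" and
    rmM_one: "rmM R m 1 = m" and
    M_bimod: "lmM R a (rmM R m b) = rmM R (lmM R a m) b" and
    lmN_add1: "lmN R (b + b') n = lmN R b n + lmN R b' n" and
    lmN_add2: "lmN R b (n + n') = lmN R b n + lmN R b n'" and
    lmN_mult: "lmN R (b * b') n = lmN R b (lmN R b' n)" and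
    lmN_one: "lmN R 1 n = n" and
    rmN_add1: "rmN R (n + n') a = rmN R n a + rmN R n' a" and
    rmN_add2: "rmN R n (a + a') = rmN R n a + rmN R n a'" and
    rmN_mult: "rmN R n (a * a') = rmN R (rmN R n a) a'" and
    rmN_one: "rmN R n 1 = n" and
    N_bimod: "lmN R b (rmN R n a) = rmN R (lmN R b n) a" and
    pMN_add1: "pMN R (m + m') n = pMN R m n + pMN R m' n" and
    pMN_add2: "pMN R m (n + n') = pMN R m n + pMN R m n'" and
    pMN_left: "pMN R (lmM R a m) n = a * pMN R m n" and
    pMN_right: "pMN R m (rmN R n a) = pMN R m n * a" and
    pMN_mid: "pMN R (rmM R m b) n = pMN R m (lmN R b n)" and
    pNM_add1: "pNM R (n + n') m = pNM R n m + pNM R n' m" and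
    pNM_add2: "pNM R n (m + m') = pNM R n m + pNM R n m'" and
    pNM_left: "pNM R (lmN R b n) m = b * pNM R n m" and
    pNM_right: "pNM R n (rmM R m b) = pNM R n m * b" and
    pNM_mid: "pNM R (rmN R n a) m = pNM R n (lmM R a m)" and
    assoc_MNM: "lmM R (pMN R m n) m' = rmM R m (pNM R n m')" and
    assoc_NMN: "lmN R (pNM R n m) n' = rmN R n (pMN R m n')" and
    A_2tf: "(2::'a) * a = 0 \<Longrightarrow> a = 0" and
    B_2tf: "(2::'b) * b = 0 \<Longrightarrow> b = 0" and
    M_faithful_left: "(\<forall>m. lmM R a m = 0) \<Longrightarrow> a = 0" and
    M_faithful_right: "(\<forall>m. rmM R m b = 0) \<Longrightarrow> b = 0"

datatype ('a, 'm, 'n, 'b) gmat = Mat (e11: 'a) (e12: 'm) (e21: 'n) (e22: 'b)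

definition mzero :: "('a::zero, 'm::zero, 'n::zero, 'b::zero) gmat" where
  "mzero = Mat 0 0 0 0"

definition mI :: "('a::{zero,one}, 'm::zero, 'n::zero, 'b::{zero,one}) gmat" where
  "mI = Mat 1 0 0 1"

definition P1 :: "('a::{zero,one}, 'm::zero, 'n::zero, 'b::zero) gmat" where
  "P1 = Mat 1 0 0 0"

definition P2 :: "('a::zero, 'm::zero, 'n::zero, 'b::{zero,one}) gmat" where
  "P2 = Mat 0 0 0 1"

definition madd :: "('a::plus, 'm::plus, 'n::plus, 'b::plus) gmat \<Rightarrow> ('a, 'm, 'n, 'b) gmat \<Rightarrow> ('a, 'm, 'n, 'b) gmat" where
  "madd X Y = Mat (e11 X + e11 Y) (e12 X + e12 Y) (e21 X + e21 Y) (e22 X + e22 Y)"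

definition msub :: "('a::minus, 'm::minus, 'n::minus, 'b::minus) gmat \<Rightarrow> ('a, 'm, 'n, 'b) gmat \<Rightarrow> ('a, 'm, 'n, 'b) gmat" where
  "msub X Y = Mat (e11 X - e11 Y) (e12 X - e12 Y) (e21 X - e21 Y) (e22 X - e22 Y)"

definition mmul :: "('a::ring_1, 'm::ab_group_add, 'n::ab_group_add, 'b::ring_1) morita \<Rightarrow>
    ('a, 'm, 'n, 'b) gmat \<Rightarrow> ('a, 'm, 'n, 'b) gmat \<Rightarrow> ('a, 'm, 'n, 'b) gmat" where
  "mmul R X Y = Mat
     (e11 X * e11 Y + pMN R (e12 X) (e21 Y))
     (lmM R (e11 X) (e12 Y) + rmM R (e12 X) (e22 Y))
     (rmN R (e21 X) (e11 Y) + lmN R (e22 X) (e21 Y))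
     (pNM R (e21 X) (e12 Y) + e22 X * e22 Y)"

definition jordan where "jordan R X Y = madd (mmul R X Y) (mmul R Y X)"
definition lie where "lie R X Y = msub (mmul R X Y) (mmul R Y X)"

definition Tmat where
  "Tmat R \<phi> = madd (mmul R (mmul R P1 (\<phi> P1)) P2) (mmul R (mmul R P2 (\<phi> P2)) P1)"

definition varphi where
  "varphi R \<phi> U = madd (msub (\<phi> U) (mmul R (\<phi> mI) U)) (lie R (Tmat R \<phi>) U)"

end

theory Submission
  imports Defs "HOL.Modules"
begin

text \<open>Both parts rest on the shape of \<open>\<phi>(P\<^sub>1)\<close> and \<open>\<phi>(P\<^sub>2)\<close>. The hypothesis for the
  orthogonal idempotents \<open>P\<^sub>1, P\<^sub>2\<close> makes their off-diagonal parts cancel and, by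
  2-torsion freeness, kills the "wrong" diagonal corners; this gives part (1) by direct computation
  and shows that \<open>\<phi>(I) = \<phi>(P\<^sub>1) + \<phi>(P\<^sub>2)\<close> is diagonal. Polarizing the hypothesis
  along \<open>P\<^sub>1 + E, P\<^sub>2 - E\<close> for square-zero off-diagonal \<open>E\<close> shows that the corners of
  \<open>\<phi>(I)\<close> intertwine the module actions, so by faithfulness of \<open>M\<close> it is central. Part (2) then
  holds because the zero-product identity survives subtracting multiplication by a central element
  and adding an inner derivation \<open>[T, -]\<close>.\<close>

instantiation gmat :: (ab_group_add, ab_group_add, ab_group_add, ab_group_add) ab_group_add
begin
definition zero_gmat_def: "0 = Mat 0 0 0 0"
definition plus_gmat_def: "X + Y = Mat (e11 X + e11 Y) (e12 X + e12 Y) (e21 X + e21 Y) (e22 X + e22 Y)"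
definition minus_gmat_def: "X - Y = Mat (e11 X - e11 Y) (e12 X - e12 Y) (e21 X - e21 Y) (e22 X - e22 Y)"
definition uminus_gmat_def: "- X = Mat (- e11 X) (- e12 X) (- e21 X) (- e22 X)"
instance by standard (simp_all add: zero_gmat_def plus_gmat_def minus_gmat_def uminus_gmat_def algebra_simps)
end

lemma gmat_sel_arith [simp]:
  "e11 (X + Y) = e11 X + e11 Y" "e12 (X + Y) = e12 X + e12 Y"
  "e21 (X + Y) = e21 X + e21 Y" "e22 (X + Y) = e22 X + e22 Y"
  "e11 (X - Y) = e11 X - e11 Y" "e12 (X - Y) = e12 X - e12 Y"
  "e21 (X - Y) = e21 X - e21 Y" "e22 (X - Y) = e22 X - e22 Y"
  "e11 (- X) = - e11 X" "e12 (- X) = - e12 X" "e21 (- X) = - e21 X" "e22 (- X) = - e22 X"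
  "e11 0 = 0" "e12 0 = 0" "e21 0 = 0" "e22 0 = 0"
  by (simp_all add: zero_gmat_def plus_gmat_def minus_gmat_def uminus_gmat_def)

lemma P1_P2_sel [simp]:
  "e11 P1 = 1" "e12 P1 = 0" "e21 P1 = 0" "e22 P1 = 0"
  "e11 P2 = 0" "e12 P2 = 0" "e21 P2 = 0" "e22 P2 = 1"
  by (simp_all add: P1_def P2_def)

lemma madd_eq_plus: "madd X Y = X + Y"
  by (simp add: madd_def plus_gmat_def)

lemma msub_eq_minus: "msub X Y = X - Y"
  by (simp add: msub_def minus_gmat_def)

lemma mzero_eq_zero: "mzero = 0"
  by (simp add: mzero_def zero_gmat_def)

lemma mI_eq_P1_plus_P2: "mI = P1 + P2"
  by (simp add: mI_def P1_def P2_def plus_gmat_def)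

lemma jordan_eq: "jordan R X Y = mmul R X Y + mmul R Y X"
  by (simp add: jordan_def madd_eq_plus)

lemma lie_eq: "lie R X Y = mmul R X Y - mmul R Y X"
  by (simp add: lie_def msub_eq_minus)

lemma varphi_eq: "varphi R \<phi> U = \<phi> U - mmul R (\<phi> mI) U + lie R (Tmat R \<phi>) U"
  by (simp add: varphi_def madd_eq_plus msub_eq_minus)

context gen_matrix_ring
begin

sublocale lmM_left: additive "\<lambda>a. lmM R a m" for m by unfold_locales (rule lmM_add1)
sublocale lmM_right: additive "lmM R a" for a by unfold_locales (rule lmM_add2)
sublocale rmM_left: additive "\<lambda>m. rmM R m b" for b by unfold_locales (rule rmM_add1)
sublocale rmM_right: additive "rmM R m" for m by unfold_locales (rule rmM_add2)
sublocale lmN_left: additive "\<lambda>b. lmN R b n" for n by unfold_locales (rule lmN_add1)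
sublocale lmN_right: additive "lmN R b" for b by unfold_locales (rule lmN_add2)
sublocale rmN_left: additive "\<lambda>n. rmN R n a" for a by unfold_locales (rule rmN_add1)
sublocale rmN_right: additive "rmN R n" for n by unfold_locales (rule rmN_add2)
sublocale pMN_left: additive "\<lambda>m. pMN R m n" for n by unfold_locales (rule pMN_add1)
sublocale pMN_right: additive "pMN R m" for m by unfold_locales (rule pMN_add2)
sublocale pNM_left: additive "\<lambda>n. pNM R n m" for m by unfold_locales (rule pNM_add1)
sublocale pNM_right: additive "pNM R n" for n by unfold_locales (rule pNM_add2)

lemmas module_zero_minus [simp] =
  lmM_left.zero lmM_right.zero rmM_left.zero rmM_right.zero
  lmN_left.zero lmN_right.zero rmN_left.zero rmN_right.zero
  pMN_left.zero pMN_right.zero pNM_left.zero pNM_right.zero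
  lmM_left.minus lmM_right.minus rmM_left.minus rmM_right.minus
  lmN_left.minus lmN_right.minus rmN_left.minus rmN_right.minus
  pMN_left.minus pMN_right.minus pNM_left.minus pNM_right.minus
  lmM_left.diff lmM_right.diff rmM_left.diff rmM_right.diff
  lmN_left.diff lmN_right.diff rmN_left.diff rmN_right.diff
  pMN_left.diff pMN_right.diff pNM_left.diff pNM_right.diff
  lmM_one rmM_one lmN_one rmN_one

lemmas module_add =
  lmM_add1 lmM_add2 rmM_add1 rmM_add2 lmN_add1 lmN_add2 rmN_add1 rmN_add2
  pMN_add1 pMN_add2 pNM_add1 pNM_add2

lemmas module_assoc =
  lmM_mult rmM_mult lmN_mult rmN_mult M_bimod N_bimod pMN_left pMN_right pMN_mid
  pNM_left pNM_right pNM_mid assoc_MNM assoc_NMN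

lemma mmul_add_left [simp]: "mmul R (X + Y) Z = mmul R X Z + mmul R Y Z"
  by (simp add: mmul_def module_add algebra_simps plus_gmat_def)

lemma mmul_add_right [simp]: "mmul R Z (X + Y) = mmul R Z X + mmul R Z Y"
  by (simp add: mmul_def module_add algebra_simps plus_gmat_def)

lemma mmul_minus_left [simp]: "mmul R (- X) Z = - mmul R X Z"
  by (simp add: mmul_def algebra_simps uminus_gmat_def)

lemma mmul_minus_right [simp]: "mmul R Z (- X) = - mmul R Z X"
  by (simp add: mmul_def algebra_simps uminus_gmat_def)

lemma mmul_diff_left [simp]: "mmul R (X - Y) Z = mmul R X Z - mmul R Y Z"
  by (metis diff_conv_add_uminus mmul_add_left mmul_minus_left)

lemma mmul_diff_right [simp]: "mmul R Z (X - Y) = mmul R Z X - mmul R Z Y"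
  by (metis diff_conv_add_uminus mmul_add_right mmul_minus_right)

lemma mmul_zero [simp]: "mmul R 0 X = 0" "mmul R X 0 = 0"
  by (simp_all add: mmul_def zero_gmat_def)

lemma mmul_assoc: "mmul R (mmul R X Y) Z = mmul R X (mmul R Y Z)"
  by (simp add: mmul_def module_add module_assoc algebra_simps)

lemma mmul_P1_P2 [simp]:
  "mmul R P1 X = Mat (e11 X) (e12 X) 0 0" "mmul R X P1 = Mat (e11 X) 0 (e21 X) 0"
  "mmul R P2 X = Mat 0 0 (e21 X) (e22 X)" "mmul R X P2 = Mat 0 (e12 X) 0 (e22 X)"
  by (simp_all add: mmul_def P1_def P2_def)

lemma jordan_lie_zero_product:
  assumes "mmul R U V = 0" "mmul R V U = 0"
  shows "jordan R (lie R T U) V + jordan R U (lie R T V) = 0"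
proof -
  have "jordan R (lie R T U) V + jordan R U (lie R T V)
      = mmul R T (mmul R U V) + mmul R T (mmul R V U)
        - mmul R (mmul R V U) T - mmul R (mmul R U V) T"
    by (simp add: jordan_eq lie_eq mmul_assoc algebra_simps)
  then show ?thesis using assms by simp
qed

lemma jordan_central_zero_product:
  assumes central: "\<And>X. mmul R Z X = mmul R X Z"
    and "mmul R U V = 0" "mmul R V U = 0"
  shows "jordan R (mmul R Z U) V + jordan R U (mmul R Z V) = 0"
proof -
  have "mmul R V (mmul R Z U) = mmul R (mmul R V U) Z"
    "mmul R U (mmul R Z V) = mmul R (mmul R U V) Z"
    by (simp_all add: central mmul_assoc flip: mmul_assoc)
  then have "jordan R (mmul R Z U) V + jordan R U (mmul R Z V)
      = mmul R Z (mmul R U V) + mmul R (mmul R V U) Z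
        + mmul R (mmul R U V) Z + mmul R Z (mmul R V U)"
    by (simp add: jordan_eq mmul_assoc)
  then show ?thesis using assms by simp
qed

text \<open>Faithfulness of \<open>M\<close> turns the intertwining condition into centrality of \<open>a\<close> and \<open>b\<close>.\<close>
lemma diagonal_central:
  assumes "\<And>m. lmM R a m = rmM R m b" and "\<And>n. rmN R n a = lmN R b n"
  shows "mmul R (Mat a 0 0 b) X = mmul R X (Mat a 0 0 b)"
proof -
  have "a * x - x * a = 0" for x
    by (rule M_faithful_left) (simp add: lmM_mult assms(1) M_bimod)
  moreover have "b * y - y * b = 0" for y
    by (rule M_faithful_right) (simp add: rmM_mult assms(1)[symmetric] M_bimod)
  ultimately show ?thesis
    by (simp add: mmul_def assms)
qed

lemma Tmat_eq: "Tmat R \<phi> = Mat 0 (e12 (\<phi> P1)) (e21 (\<phi> P2)) 0"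
  by (simp add: Tmat_def madd_eq_plus plus_gmat_def)

end

locale zero_product_jordan = gen_matrix_ring R for R ::
    "('a::ring_1, 'm::ab_group_add, 'n::ab_group_add, 'b::ring_1) morita" +
  fixes \<phi> :: "('a, 'm, 'n, 'b) gmat \<Rightarrow> ('a, 'm, 'n, 'b) gmat"
  assumes phi_add: "\<phi> (X + Y) = \<phi> X + \<phi> Y"
    and jordan_zero_product:
      "mmul R U V = 0 \<Longrightarrow> mmul R V U = 0 \<Longrightarrow> jordan R (\<phi> U) V + jordan R U (\<phi> V) = 0"
begin

sublocale phi: additive \<phi> by unfold_locales (rule phi_add)

lemma jordan_zero_product_polarized:
  assumes "mmul R X Y = 0" "mmul R Y X = 0" "mmul R E E = 0"
    and "mmul R (X + E) (Y - E) = 0" "mmul R (Y - E) (X + E) = 0"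
  shows "jordan R (\<phi> E) Y - jordan R (\<phi> X) E + jordan R E (\<phi> Y) - jordan R X (\<phi> E) = 0"
proof -
  have "jordan R (\<phi> E) Y - jordan R (\<phi> X) E + jordan R E (\<phi> Y) - jordan R X (\<phi> E)
      = (jordan R (\<phi> (X + E)) (Y - E) + jordan R (X + E) (\<phi> (Y - E)))
        - (jordan R (\<phi> X) Y + jordan R X (\<phi> Y))
        + (jordan R (\<phi> E) E + jordan R E (\<phi> E))"
    by (simp add: jordan_eq phi_add phi.diff algebra_simps)
  then show ?thesis using assms by (simp add: jordan_zero_product)
qed

lemma phi_P1_P2_entries:
  "e22 (\<phi> P1) = 0" "e11 (\<phi> P2) = 0"
  "e12 (\<phi> P2) = - e12 (\<phi> P1)" "e21 (\<phi> P2) = - e21 (\<phi> P1)"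
proof -
  obtain a1 m1 n1 b1 where h1: "\<phi> P1 = Mat a1 m1 n1 b1" by (cases "\<phi> P1")
  obtain a2 m2 n2 b2 where h2: "\<phi> P2 = Mat a2 m2 n2 b2" by (cases "\<phi> P2")
  have "jordan R (\<phi> P1) P2 + jordan R P1 (\<phi> P2) = 0"
    by (rule jordan_zero_product) (simp_all add: zero_gmat_def)
  then have "a2 + a2 = 0" "m1 + m2 = 0" "n1 + n2 = 0" "b1 + b1 = 0"
    unfolding h1 h2 by (simp_all add: jordan_eq zero_gmat_def plus_gmat_def add.commute)
  then show "e22 (\<phi> P1) = 0" "e11 (\<phi> P2) = 0"
    "e12 (\<phi> P2) = - e12 (\<phi> P1)" "e21 (\<phi> P2) = - e21 (\<phi> P1)"
    using A_2tf[of a2] B_2tf[of b1]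
    by (simp_all add: h1 h2 mult_2 eq_neg_iff_add_eq_0 add.commute)
qed

text \<open>Polarize the zero-product identity along \<open>P\<^sub>1 + E\<close>, \<open>P\<^sub>2 - E\<close> for a
  square-zero \<open>E\<close> in the \<open>M\<close> (resp. \<open>N\<close>) corner and read off that corner.\<close>
lemma phi_corners_intertwine:
  "lmM R (e11 (\<phi> P1)) m = rmM R m (e22 (\<phi> P2))"
  "rmN R n (e11 (\<phi> P1)) = lmN R (e22 (\<phi> P2)) n"
proof -
  let ?J = "\<lambda>E. jordan R (\<phi> E) P2 - jordan R (\<phi> P1) E + jordan R E (\<phi> P2) - jordan R P1 (\<phi> E)"
  have J: "?J E = 0" if "E = Mat 0 m 0 0 \<or> E = Mat 0 0 n 0" for E m n
    by (rule jordan_zero_product_polarized)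
      (use that in \<open>auto simp: mmul_def zero_gmat_def plus_gmat_def minus_gmat_def\<close>)
  have "e12 (?J (Mat 0 m 0 0)) = 0" "e21 (?J (Mat 0 0 n 0)) = 0"
    using J[of "Mat 0 m 0 0" m 0] J[of "Mat 0 0 n 0" 0 n] by simp_all
  then show "lmM R (e11 (\<phi> P1)) m = rmM R m (e22 (\<phi> P2))"
    "rmN R n (e11 (\<phi> P1)) = lmN R (e22 (\<phi> P2)) n"
    by (simp_all add: jordan_eq mmul_def phi_P1_P2_entries algebra_simps)
qed

lemma phi_identity: "\<phi> mI = Mat (e11 (\<phi> P1)) 0 0 (e22 (\<phi> P2))"
  by (rule gmat.expand) (simp add: mI_eq_P1_plus_P2 phi_add phi_P1_P2_entries)

lemma phi_identity_central: "mmul R (\<phi> mI) X = mmul R X (\<phi> mI)"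
  unfolding phi_identity by (rule diagonal_central) (simp_all add: phi_corners_intertwine)

lemma varphi_P1: "varphi R \<phi> P1 = 0"
  and varphi_P2: "varphi R \<phi> P2 = 0"
  by (simp_all add: varphi_eq lie_eq phi_identity Tmat_eq phi_P1_P2_entries
      zero_gmat_def mmul_def minus_gmat_def plus_gmat_def)

lemma varphi_add: "varphi R \<phi> (X + Y) = varphi R \<phi> X + varphi R \<phi> Y"
  by (simp add: varphi_eq lie_eq phi_add algebra_simps)

lemma varphi_zero_product:
  assumes "mmul R U V = 0" "mmul R V U = 0"
  shows "jordan R (varphi R \<phi> U) V + jordan R U (varphi R \<phi> V) = 0"
proof -
  have "jordan R (varphi R \<phi> U) V + jordan R U (varphi R \<phi> V)
      = (jordan R (\<phi> U) V + jordan R U (\<phi> V))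
        - (jordan R (mmul R (\<phi> mI) U) V + jordan R U (mmul R (\<phi> mI) V))
        + (jordan R (lie R (Tmat R \<phi>) U) V + jordan R U (lie R (Tmat R \<phi>) V))"
    by (simp add: varphi_eq jordan_eq algebra_simps)
  also have "\<dots> = 0"
    using jordan_zero_product[OF assms] jordan_lie_zero_product[OF assms]
      jordan_central_zero_product[OF phi_identity_central assms] by simp
  finally show ?thesis .
qed

end

theorem lemma2p4:
  fixes R :: "('a::ring_1, 'm::ab_group_add, 'n::ab_group_add, 'b::ring_1) morita"
    and \<phi> :: "('a, 'm, 'n, 'b) gmat \<Rightarrow> ('a, 'm, 'n, 'b) gmat"
  assumes "gen_matrix_ring R"
    and additive: "\<And>X Y. \<phi> (madd X Y) = madd (\<phi> X) (\<phi> Y)"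
    and zp: "\<And>U V. mmul R U V = mzero \<Longrightarrow> mmul R V U = mzero \<Longrightarrow>
               madd (jordan R (\<phi> U) V) (jordan R U (\<phi> V)) = mzero"
  shows "(\<forall>X Y. varphi R \<phi> (madd X Y) = madd (varphi R \<phi> X) (varphi R \<phi> Y))
    \<and> varphi R \<phi> P1 = mzero \<and> varphi R \<phi> P2 = mzero
    \<and> (\<forall>U V. mmul R U V = mzero \<and> mmul R V U = mzero \<longrightarrow>
         madd (jordan R (varphi R \<phi> U) V) (jordan R U (varphi R \<phi> V)) = mzero)"
proof -
  interpret zero_product_jordan R \<phi>
    by (intro zero_product_jordan.intro zero_product_jordan_axioms.intro assms(1))
      (use additive zp in \<open>simp_all add: madd_eq_plus mzero_eq_zero\<close>)
  show ?thesis
    by (simp add: madd_eq_plus mzero_eq_zero varphi_add varphi_P1 varphi_P2 varphi_zero_product)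
qed

end
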